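(* Let $k>0$ be real and let $M=\begin{bmatrix} k-1 & k-1 & k\\ 1&0&0\\ 0&1&0\end{bmatrix}$ (which is invertible). For every integer $n\ge1$, $$M^{-n}=\left(M^{-1}\right)^n=\left(M^n\right)^{-1}=\begin{bmatrix} J_{-(n-1)} & T_{-(n+1)} & kJ_{-n}\\ J_{-n} & T_{-(n+2)} & kJ_{-(n+1)}\\ J_{-(n+1)} & T_{-(n+3)} & kJ_{-(n+2)}\end{bmatrix},$$ where $T_{-m}=(k-1)J_{-(m-1)}+kJ_{-m}$ for every integer $m$.
   Context: For real $k>0$, the third-order $k$-Jacobsthal sequence $(J_n)=(J_n^{(3)}(k))$ is defined by $J_0=0$, $J_1=1$, $J_2=k-1$ and $J_{n+3}=(k-1)J_{n+2}+(k-1)J_{n+1}+kJ_n$, and extended to negative indices by the backward recurrence $J_{-n}=\frac{1-k}{k}J_{-(n-1)}+\frac{1-k}{k}J_{-(n-2)}+\frac{1}{k}J_{-(n-3)}$ for $n\ge1$. *)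

theory Defs
  imports "HOL-Analysis.Analysis"
begin

fun Jpos :: "real \<Rightarrow> nat \<Rightarrow> real" where
  "Jpos k 0 = 0"
| "Jpos k (Suc 0) = 1"
| "Jpos k (Suc (Suc 0)) = k - 1"
| "Jpos k (Suc (Suc (Suc n))) =
     (k - 1) * Jpos k (Suc (Suc n)) + (k - 1) * Jpos k (Suc n) + k * Jpos k n"

text \<open>Jneg k n = J_{-n}, via the backward recurrence (n >= 1), with J_0 = 0.\<close>
fun Jneg :: "real \<Rightarrow> nat \<Rightarrow> real" where
  "Jneg k 0 = Jpos k 0"
| "Jneg k (Suc 0) =
     (1 - k) / k * Jpos k 0 + (1 - k) / k * Jpos k 1 + 1 / k * Jpos k 2"
| "Jneg k (Suc (Suc 0)) =
     (1 - k) / k * Jneg k 1 + (1 - k) / k * Jpos k 0 + 1 / k * Jpos k 1"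
| "Jneg k (Suc (Suc (Suc n))) =
     (1 - k) / k * Jneg k (Suc (Suc n)) + (1 - k) / k * Jneg k (Suc n) + 1 / k * Jneg k n"

definition J :: "real \<Rightarrow> int \<Rightarrow> real" where
  "J k i = (if 0 \<le> i then Jpos k (nat i) else Jneg k (nat (- i)))"

definition Tneg :: "real \<Rightarrow> int \<Rightarrow> real" where
  "Tneg k m = (k - 1) * J k (- (m - 1)) + k * J k (- m)"

fun matpow :: "'a::semiring_1 ^ 'n ^ 'n \<Rightarrow> nat \<Rightarrow> 'a ^ 'n ^ 'n" where
  "matpow A 0 = mat 1"
| "matpow A (Suc n) = A ** matpow A n"

definition Mk :: "real \<Rightarrow> real ^ 3 ^ 3" where
  "Mk k = vector [vector [k - 1, k - 1, k], vector [1, 0, 0], vector [0, 1, 0]]"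

end

theory Submission
  imports Defs
begin

(* Write A_i for the claimed matrix with n replaced by an integer i. The backward recurrence
   defining J at negative indices is the forward recurrence read backwards, so J satisfies
   J_(i+3) = (k-1) J_(i+2) + (k-1) J_(i+1) + k J_i on all of Z. Hence M A_(i+1) = A_i, and
   A_0 = I because J_1 = 1, J_0 = J_(-1) = 0 and J_(-2) = 1/k. By induction M^n A_n = I, and
   a one-sided inverse of a square matrix over a field is its inverse. *)

lemma matrix_inv_unique:
  fixes A :: "'a::semiring_1^'n^'m" and B :: "'a^'m^'n"
  assumes "A ** B = mat 1" and "B ** A = mat 1"
  shows "matrix_inv A = B"
proof -
  define C where "C = matrix_inv A"
  have C: "A ** C = mat 1 \<and> C ** A = mat 1"
    unfolding C_def matrix_inv_def by (rule someI[of _ B]) (use assms in blast)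
  have "C = C ** (A ** B)"
    by (simp add: assms(1) matrix_mul_rid)
  also have "\<dots> = (C ** A) ** B"
    by (simp add: matrix_mul_assoc)
  also have "\<dots> = B"
    using C by simp
  finally show ?thesis
    unfolding C_def .
qed

lemma matrix_inv_eq_right_inverse:
  fixes A B :: "'a::field^'n^'n"
  assumes "A ** B = mat 1"
  shows "matrix_inv A = B"
  using assms matrix_left_right_inverse by (blast intro: matrix_inv_unique)

lemma matpow_Suc_right: "matpow A (Suc n) = matpow A n ** A"
  by (induction n) (simp_all add: matrix_mul_lid matrix_mul_rid matrix_mul_assoc)

lemma matpow_mult_matpow_right_inverse:
  fixes A B :: "'a::semiring_1^'n^'n"
  assumes "A ** B = mat 1"
  shows "matpow A n ** matpow B n = mat 1"
proof (induction n)
  case 0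
  then show ?case by simp
next
  case (Suc n)
  have "matpow A (Suc n) ** matpow B (Suc n) = (matpow A n ** A) ** (B ** matpow B n)"
    by (simp only: matpow_Suc_right[of A n] matpow.simps(2)[of B n])
  also have "\<dots> = matpow A n ** ((A ** B) ** matpow B n)"
    by (simp only: matrix_mul_assoc)
  also have "\<dots> = mat 1"
    using Suc assms by simp
  finally show ?case .
qed

lemma matrix_inv_matpow:
  fixes A :: "'a::field^'n^'n"
  assumes "invertible A"
  shows "matrix_inv (matpow A n) = matpow (matrix_inv A) n"
proof -
  obtain B where "A ** B = mat 1"
    using assms invertible_right_inverse by blast
  then have "matrix_inv A = B"
    by (rule matrix_inv_eq_right_inverse)
  with \<open>A ** B = mat 1\<close> show ?thesis
    by (simp add: matrix_inv_eq_right_inverse matpow_mult_matpow_right_inverse)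
qed

lemma J_of_nat: "J k (int n) = Jpos k n"
  by (simp add: J_def)

lemma J_uminus_of_nat: "J k (- int n) = Jneg k n"
  by (auto simp: J_def)

lemma J_recurrence:
  assumes "k \<noteq> 0"
  shows "J k (i + 3) = (k - 1) * J k (i + 2) + (k - 1) * J k (i + 1) + k * J k i"
proof -
  consider m where "i = int m" | "i = -1" | "i = -2" | m where "i = - int (m + 3)"
  proof (cases "i \<ge> 0")
    case True
    then show ?thesis using that(1) nonneg_int_cases by blast
  next
    case False
    then have "i = -1 \<or> i = -2 \<or> i = - int (nat (- i - 3) + 3)" by linarith
    then show ?thesis using that(2-4) by blast
  qed
  then show ?thesis
  proof cases
    case (1 m)
    have "J k (i + int d) = Jpos k (m + d)" for d
      using 1 J_of_nat[of k "m + d"] by simp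
    from this[of 3] this[of 2] this[of 1] this[of 0] show ?thesis
      by (simp add: eval_nat_numeral)
  next
    case 2
    then show ?thesis using assms by (simp add: J_def eval_nat_numeral field_simps)
  next
    case 3
    then show ?thesis using assms by (simp add: J_def eval_nat_numeral field_simps)
  next
    case (4 m)
    then have "i + 3 = - int m" "i + 2 = - int (Suc m)" "i + 1 = - int (Suc (Suc m))"
      "i = - int (Suc (Suc (Suc m)))"
      by simp_all
    then have "J k (i + 3) = Jneg k m" "J k (i + 2) = Jneg k (Suc m)"
      "J k (i + 1) = Jneg k (Suc (Suc m))" "J k i = Jneg k (Suc (Suc (Suc m)))"
      by (simp_all only: J_uminus_of_nat)
    moreover have "k * Jneg k (Suc (Suc (Suc m)))
        = (1 - k) * Jneg k (Suc (Suc m)) + (1 - k) * Jneg k (Suc m) + Jneg k m"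
      using assms by (simp add: field_simps)
    ultimately show ?thesis
      by (simp del: Jneg.simps add: algebra_simps)
  qed
qed

definition J_matrix :: "real \<Rightarrow> int \<Rightarrow> real^3^3" where
  "J_matrix k i =
     vector [vector [J k (- (i - 1)), Tneg k (i + 1), k * J k (- i)],
             vector [J k (- i), Tneg k (i + 2), k * J k (- (i + 1))],
             vector [J k (- (i + 1)), Tneg k (i + 3), k * J k (- (i + 2))]]"

lemma J_matrix_0: "k \<noteq> 0 \<Longrightarrow> J_matrix k 0 = mat 1"
  using J_recurrence[of k "-3"]
  by (simp add: vec_eq_iff forall_3 J_matrix_def Tneg_def mat_def J_def eval_nat_numeral field_simps)

lemma Mk_mult_J_matrix:
  assumes "k \<noteq> 0"
  shows "Mk k ** J_matrix k (i + 1) = J_matrix k i"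
proof -
  \<comment> \<open>Indices are written in simp normal form, so that these act as rewrite rules.\<close>
  have shift:
    "J k (1 - i) = (k - 1) * J k (- i) + (k - 1) * J k (- 1 - i) + k * J k (- i - 2)"
    "J k (- i) = (k - 1) * J k (- 1 - i) + (k - 1) * J k (- i - 2) + k * J k (- i - 3)"
    "J k (- 1 - i) = (k - 1) * J k (- i - 2) + (k - 1) * J k (- i - 3) + k * J k (- i - 4)"
    using J_recurrence[OF assms, of "- i - 2"] J_recurrence[OF assms, of "- i - 3"]
      J_recurrence[OF assms, of "- i - 4"] by (simp_all add: algebra_simps)
  show ?thesis
    by (simp add: vec_eq_iff forall_3 matrix_matrix_mult_def sum_3 Mk_def J_matrix_def Tneg_def
        shift algebra_simps)
qed

lemma matpow_Mk_mult_J_matrix: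
  assumes "k \<noteq> 0"
  shows "matpow (Mk k) n ** J_matrix k (int n) = mat 1"
proof (induction n)
  case 0
  then show ?case by (simp add: J_matrix_0[OF assms])
next
  case (Suc n)
  have "matpow (Mk k) (Suc n) ** J_matrix k (int (Suc n))
      = matpow (Mk k) n ** (Mk k ** J_matrix k (int n + 1))"
    by (simp only: matpow_Suc_right[of "Mk k" n] matrix_mul_assoc of_nat_Suc add.commute)
  then show ?case
    using Suc Mk_mult_J_matrix[OF assms, of "int n"] by simp
qed

theorem mainTheorem8:
  fixes k :: real and n :: nat
  assumes "k > 0" and "n \<ge> 1"
  shows "invertible (Mk k) \<and>
    matpow (matrix_inv (Mk k)) n =
      vector [vector [J k (- (int n - 1)), Tneg k (int n + 1), k * J k (- int n)],
              vector [J k (- int n), Tneg k (int n + 2), k * J k (- (int n + 1))],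
              vector [J k (- (int n + 1)), Tneg k (int n + 3), k * J k (- (int n + 2))]] \<and>
    matrix_inv (matpow (Mk k) n) =
      vector [vector [J k (- (int n - 1)), Tneg k (int n + 1), k * J k (- int n)],
              vector [J k (- int n), Tneg k (int n + 2), k * J k (- (int n + 1))],
              vector [J k (- (int n + 1)), Tneg k (int n + 3), k * J k (- (int n + 2))]]"
proof -
  have k: "k \<noteq> 0"
    using assms(1) by simp
  have "Mk k ** J_matrix k 1 = mat 1"
    using Mk_mult_J_matrix[OF k, of 0] J_matrix_0[OF k] by simp
  then have "invertible (Mk k)"
    using invertible_right_inverse by blast
  moreover have "matrix_inv (matpow (Mk k) n) = J_matrix k (int n)"
    by (rule matrix_inv_eq_right_inverse[OF matpow_Mk_mult_J_matrix[OF k]])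
  ultimately show ?thesis
    by (simp add: matrix_inv_matpow[symmetric] J_matrix_def)
qed

end
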